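(* Assume the two-period setup below. (a) Suppose Parallel Trends holds. (a-Cont) If the treatment is continuous (Continuous Treatment condition) and the map $(a,b)\mapsto ATT(a|b)$ is differentiable on $\mathcal{D}_+\times\mathcal{D}_+$, then for every $d\in\mathcal{D}_+$, $$\frac{\partial \mathbb{E}[\Delta Y\mid D=d]}{\partial d}=ACRT(d|d)+\frac{\partial ATT(d|l)}{\partial l}\Big|_{l=d}.$$ (a-MV) If the treatment is multi-valued (Multi-Valued Treatment condition), then for every $j=1,\dots,J$, $$\mathbb{E}[\Delta Y\mid D=d_j]-\mathbb{E}[\Delta Y\mid D=d_{j-1}]=ACRT(d_j|d_j)+\big(ATT(d_{j-1}|d_j)-ATT(d_{j-1}|d_{j-1})\big).$$ (b) Suppose Strong Parallel Trends holds. (b-Cont) Under the Continuous Treatment condition, $d\mapsto \mathbb{E}[Y_t(d)]$ is differentiable on $\mathcal{D}_+$ and for every $d\in\mathcal{D}_+$, $\frac{\partial \mathbb{E}[\Delta Y\mid D=d]}{\partial d}=ACR(d)$. (b-MV) Under the Multi-Valued Treatment condition, for every $j=1,\dots,J$, $\mathbb{E}[\Delta Y\mid D=d_j]-\mathbb{E}[\Delta Y\mid D=d_{j-1}]=ACR(d_j)$.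
   Context: Two-period setup. There are two periods $t-1$ and $t$. For each dose $d$ in the support $\mathcal{D}$ of a scalar treatment $D\ge 0$, each unit has potential outcomes $Y_{t-1}(d),Y_t(d)$ (all with finite means). Assumptions: (Random sampling) the observed data $\{Y_{it},Y_{i,t-1},D_i\}_{i=1}^n$ are i.i.d.; (Support) $\mathcal{D}=\{0\}\cup\mathcal{D}_+$ with $\mathcal{D}_+\subset(0,\infty)$, $\mathbb{P}(D=0)>0$ and every $d\in\mathcal{D}_+$ lies in the support of $D$, and no unit is treated in period $t-1$; (No anticipation / observed outcomes) $Y_{t-1}=Y_{t-1}(0)$ and $Y_t=Y_t(D)$. Write $\Delta Y:=Y_t-Y_{t-1}$. Continuous Treatment condition: $\mathcal{D}_+=[d_L,d_U]$ with $0<d_L<d_U<\infty$, $\mathbb{P}(D=0)>0$, $D$ has a density $f_D$ on $\mathcal{D}_+$ with $f_D(d)>0$ for all $d\in\mathcal{D}_+$, and $d\mapsto\mathbb{E}[\Delta Y\mid D=d]$ is continuously differentiable on $\mathcal{D}_+$. Multi-Valued Treatment condition: $\mathcal{D}_+=\{d_1,\dots,d_J\}$ with $0<d_1<\dots<d_J$, $\mathbb{P}(D=d)>0$ for all $d\in\mathcal{D}$; set $d_0:=0$. Parameters: $ATT(a|b):=\mathbb{E}[Y_t(a)-Y_t(0)\mid D=b]$ (so $ATT(0|b)=0$); $ATE(d):=\mathbb{E}[Y_t(d)-Y_t(0)]$. Continuous case: $ACRT(d|d):=\frac{\partial \mathbb{E}[Y_t(l)\mid D=d]}{\partial l}\big|_{l=d}$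 and $ACR(d):=\frac{\partial\mathbb{E}[Y_t(d)]}{\partial d}$. Discrete case: $ACRT(d_j|d_j):=\mathbb{E}[Y_t(d_j)-Y_t(d_{j-1})\mid D=d_j]$ and $ACR(d_j):=\mathbb{E}[Y_t(d_j)-Y_t(d_{j-1})]$. Parallel Trends: for all $d\in\mathcal{D}$, $\mathbb{E}[Y_t(0)-Y_{t-1}(0)\mid D=d]=\mathbb{E}[Y_t(0)-Y_{t-1}(0)\mid D=0]$. Strong Parallel Trends: for all $d\in\mathcal{D}$, $\mathbb{E}[Y_t(d)-Y_{t-1}(0)]=\mathbb{E}[Y_t(d)-Y_{t-1}(0)\mid D=d]$. *)

theory Defs
  imports "HOL-Probability.Probability"
begin

text \<open>Conditional expectations given D = d are taken with respect to a fixed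
regular conditional distribution K of the sample point given D, which is
proper (K d is concentrated on the event D = d) for every d in the support S.\<close>

definition reg_cond_dist ::
  "'a measure \<Rightarrow> ('a \<Rightarrow> real) \<Rightarrow> real set \<Rightarrow> (real \<Rightarrow> 'a measure) \<Rightarrow> bool" where
  "reg_cond_dist M D S K \<longleftrightarrow>
     (\<forall>d. prob_space (K d) \<and> sets (K d) = sets M) \<and>
     (\<forall>A\<in>sets M. (\<lambda>d. emeasure (K d) A) \<in> borel_measurable borel) \<and>
     (\<forall>A\<in>sets M. \<forall>B\<in>sets borel.
        emeasure M (A \<inter> (D -` B \<inter> space M))
          = (\<integral>\<^sup>+ x. indicator B x * emeasure (K x) A \<partial>(distr M borel D))) \<and>
     (\<forall>d\<in>S. AE \<omega> in K d. D \<omega> = d)"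

definition condE :: "(real \<Rightarrow> 'a measure) \<Rightarrow> ('a \<Rightarrow> real) \<Rightarrow> real \<Rightarrow> real" where
  "condE K X d = (\<integral>\<omega>. X \<omega> \<partial>(K d))"

text \<open>Observed outcome change Delta Y = Y_t - Y_{t-1} = Y_t(D) - Y_{t-1}(0);
Y1 a = Y_t(a), Y0 a = Y_{t-1}(a).\<close>
definition DeltaY :: "('a \<Rightarrow> real) \<Rightarrow> (real \<Rightarrow> 'a \<Rightarrow> real) \<Rightarrow> (real \<Rightarrow> 'a \<Rightarrow> real) \<Rightarrow> 'a \<Rightarrow> real" where
  "DeltaY D Y0 Y1 = (\<lambda>\<omega>. Y1 (D \<omega>) \<omega> - Y0 0 \<omega>)"

definition ATT :: "(real \<Rightarrow> 'a measure) \<Rightarrow> (real \<Rightarrow> 'a \<Rightarrow> real) \<Rightarrow> real \<Rightarrow> real \<Rightarrow> real" where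
  "ATT K Y1 a b = condE K (\<lambda>\<omega>. Y1 a \<omega> - Y1 0 \<omega>) b"

text \<open>Two-period setup with support S of the treatment (S = {0} union D_+).\<close>
definition two_period_setup ::
  "'a measure \<Rightarrow> ('a \<Rightarrow> real) \<Rightarrow> (real \<Rightarrow> 'a \<Rightarrow> real) \<Rightarrow> (real \<Rightarrow> 'a \<Rightarrow> real)
    \<Rightarrow> (real \<Rightarrow> 'a measure) \<Rightarrow> real set \<Rightarrow> bool" where
  "two_period_setup M D Y0 Y1 K S \<longleftrightarrow>
     prob_space M \<and> D \<in> borel_measurable M \<and>
     0 \<in> S \<and> S \<subseteq> {0..} \<and>
     (\<forall>a\<in>S. integrable M (Y1 a) \<and> integrable M (Y0 a)) \<and>
     (\<lambda>\<omega>. Y1 (D \<omega>) \<omega>) \<in> borel_measurable M \<and>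
     reg_cond_dist M D S K \<and>
     (\<forall>a\<in>S. \<forall>b\<in>S. integrable (K b) (Y1 a) \<and> integrable (K b) (Y0 0))"

definition parallel_trends ::
  "(real \<Rightarrow> 'a measure) \<Rightarrow> (real \<Rightarrow> 'a \<Rightarrow> real) \<Rightarrow> (real \<Rightarrow> 'a \<Rightarrow> real) \<Rightarrow> real set \<Rightarrow> bool" where
  "parallel_trends K Y0 Y1 S \<longleftrightarrow>
     (\<forall>d\<in>S. condE K (\<lambda>\<omega>. Y1 0 \<omega> - Y0 0 \<omega>) d = condE K (\<lambda>\<omega>. Y1 0 \<omega> - Y0 0 \<omega>) 0)"

definition strong_parallel_trends ::
  "'a measure \<Rightarrow> (real \<Rightarrow> 'a measure) \<Rightarrow> (real \<Rightarrow> 'a \<Rightarrow> real) \<Rightarrow> (real \<Rightarrow> 'a \<Rightarrow> real) \<Rightarrow> real set \<Rightarrow> bool" where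
  "strong_parallel_trends M K Y0 Y1 S \<longleftrightarrow>
     (\<forall>d\<in>S. (\<integral>\<omega>. Y1 d \<omega> - Y0 0 \<omega> \<partial>M) = condE K (\<lambda>\<omega>. Y1 d \<omega> - Y0 0 \<omega>) d)"

text \<open>Continuous Treatment condition with D_+ = [dL, dU] and density f on D_+.\<close>
definition continuous_treatment ::
  "'a measure \<Rightarrow> ('a \<Rightarrow> real) \<Rightarrow> (real \<Rightarrow> 'a \<Rightarrow> real) \<Rightarrow> (real \<Rightarrow> 'a \<Rightarrow> real)
    \<Rightarrow> (real \<Rightarrow> 'a measure) \<Rightarrow> real \<Rightarrow> real \<Rightarrow> (real \<Rightarrow> real) \<Rightarrow> bool" where
  "continuous_treatment M D Y0 Y1 K dL dU f \<longleftrightarrow>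
     0 < dL \<and> dL < dU \<and>
     measure M {\<omega>\<in>space M. D \<omega> \<in> insert 0 {dL..dU}} = 1 \<and>
     measure M {\<omega>\<in>space M. D \<omega> = 0} > 0 \<and>
     f \<in> borel_measurable borel \<and> (\<forall>d\<in>{dL..dU}. f d > 0) \<and>
     (\<forall>B\<in>sets borel. B \<subseteq> {dL..dU} \<longrightarrow>
        emeasure M {\<omega>\<in>space M. D \<omega> \<in> B} = (\<integral>\<^sup>+ x. ennreal (f x) * indicator B x \<partial>lborel)) \<and>
     (\<exists>m'. continuous_on {dL..dU} m' \<and>
        (\<forall>d\<in>{dL..dU}. ((\<lambda>l. condE K (DeltaY D Y0 Y1) l) has_real_derivative m' d)
                           (at d within {dL..dU})))"

text \<open>Multi-Valued Treatment condition with D_+ = {d_1 < ... < d_J}, d_0 = 0.\<close>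
definition multivalued_treatment ::
  "'a measure \<Rightarrow> ('a \<Rightarrow> real) \<Rightarrow> nat \<Rightarrow> (nat \<Rightarrow> real) \<Rightarrow> bool" where
  "multivalued_treatment M D J ds \<longleftrightarrow>
     1 \<le> J \<and> ds 0 = 0 \<and> (\<forall>i j. i < j \<and> j \<le> J \<longrightarrow> ds i < ds j) \<and>
     measure M {\<omega>\<in>space M. D \<omega> \<in> ds ` {0..J}} = 1 \<and>
     (\<forall>j\<le>J. measure M {\<omega>\<in>space M. D \<omega> = ds j} > 0)"

end

theory Submission
  imports Defs
begin

text \<open>On the event D = d the observed change is Y_t(d) - Y_{t-1}(0), so E[\<Delta>Y | D = d]
  = E[Y_t(d) | D = d] - E[Y_{t-1}(0) | D = d]. Under parallel trends the second term equals
  E[Y_t(0) | D = d] up to a constant, hence E[\<Delta>Y | D = d] = ATT(d|d) + const, and the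
  derivative (resp. increment) of ATT(l|l) along the diagonal splits into the two partial
  derivatives (resp. increments) of ATT. Under strong parallel trends
  E[\<Delta>Y | D = d] = E[Y_t(d)] - E[Y_{t-1}(0)], and both claims are immediate.\<close>

lemma has_real_derivative_along_curve:
  fixes \<gamma> :: "real \<Rightarrow> 'b::real_normed_vector" and g :: "'b \<Rightarrow> real"
  assumes "(\<gamma> has_vector_derivative v) (at t within T)"
    and "(g has_derivative g') (at p within S)" and "\<gamma> t = p" and "\<gamma> ` T \<subseteq> S"
  shows "((\<lambda>l. g (\<gamma> l)) has_real_derivative g' v) (at t within T)"
  using vector_derivative_diff_chain_within[OF assms(1), of g g']
    has_derivative_subset[OF assms(2,4)] assms(3)
  by (simp add: has_real_derivative_iff_has_vector_derivative o_def)

lemma has_real_derivative_partials: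
  fixes g :: "real \<times> real \<Rightarrow> real"
  assumes g: "(g has_derivative g') (at (a, b) within T \<times> U)" and "a \<in> T" and "b \<in> U"
  shows "((\<lambda>x. g (x, b)) has_real_derivative g' (1, 0)) (at a within T)"
    and "((\<lambda>y. g (a, y)) has_real_derivative g' (0, 1)) (at b within U)"
proof -
  have "((\<lambda>x. (x, b)) has_vector_derivative (1, 0)) (at a within T)"
    by (intro has_vector_derivative_Pair) auto
  then show "((\<lambda>x. g (x, b)) has_real_derivative g' (1, 0)) (at a within T)"
    using \<open>b \<in> U\<close> by (intro has_real_derivative_along_curve[OF _ g]) auto
  have "((\<lambda>y. (a, y)) has_vector_derivative (0, 1)) (at b within U)"
    by (intro has_vector_derivative_Pair) auto
  then show "((\<lambda>y. g (a, y)) has_real_derivative g' (0, 1)) (at b within U)"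
    using \<open>a \<in> T\<close> by (intro has_real_derivative_along_curve[OF _ g]) auto
qed

lemma has_real_derivative_diagonal:
  fixes g :: "real \<times> real \<Rightarrow> real"
  assumes g: "(g has_derivative g') (at (a, a) within T \<times> T)"
  shows "((\<lambda>x. g (x, x)) has_real_derivative g' (1, 0) + g' (0, 1)) (at a within T)"
proof -
  have "((\<lambda>x. (x, x)) has_vector_derivative (1, 1)) (at a within T)"
    by (intro has_vector_derivative_Pair) auto
  then have "((\<lambda>x. g (x, x)) has_real_derivative g' (1, 1)) (at a within T)"
    by (intro has_real_derivative_along_curve[OF _ g]) auto
  moreover have "g' (1, 1) = g' (1, 0) + g' (0, 1)"
    using linear_add[OF has_derivative_linear[OF g], of "(1, 0)" "(0, 1)"] by simp
  ultimately show ?thesis by simp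
qed

lemma has_field_derivative_add_const_on:
  assumes "(f has_field_derivative f') (at x within T)" and "x \<in> T"
    and "\<And>y. y \<in> T \<Longrightarrow> g y = f y + c"
  shows "(g has_field_derivative f') (at x within T)"
  using has_field_derivative_transform_within[OF DERIV_add[OF assms(1) DERIV_const] zero_less_one]
    assms(2,3) by simp

lemma condE_diff:
  assumes "integrable (K d) f" and "integrable (K d) g"
  shows "condE K (\<lambda>\<omega>. f \<omega> - g \<omega>) d = condE K f d - condE K g d"
  using assms unfolding condE_def by (rule Bochner_Integration.integral_diff)

context
  fixes M :: "'a measure" and D :: "'a \<Rightarrow> real"
    and Y0 Y1 :: "real \<Rightarrow> 'a \<Rightarrow> real" and K :: "real \<Rightarrow> 'a measure" and S :: "real set"
  assumes tps: "two_period_setup M D Y0 Y1 K S"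
begin

lemma integrable_cond_potential_outcomes:
  assumes "a \<in> S" and "b \<in> S"
  shows "integrable (K b) (Y1 a)" and "integrable (K b) (Y0 0)"
  using tps assms unfolding two_period_setup_def by auto

lemma condE_DeltaY:
  assumes d: "d \<in> S"
  shows "condE K (DeltaY D Y0 Y1) d = condE K (Y1 d) d - condE K (Y0 0) d"
proof -
  have sets_K: "sets (K d) = sets M" and D_eq: "AE \<omega> in K d. D \<omega> = d"
    using tps d unfolding two_period_setup_def reg_cond_dist_def by auto
  have "(\<lambda>\<omega>. Y1 (D \<omega>) \<omega>) \<in> borel_measurable (K d)"
    using tps unfolding measurable_cong_sets[OF sets_K refl] two_period_setup_def by simp
  moreover have "Y0 0 \<in> borel_measurable (K d)"
    using integrable_cond_potential_outcomes(2)[OF d d] by simp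
  ultimately have "condE K (DeltaY D Y0 Y1) d = condE K (\<lambda>\<omega>. Y1 d \<omega> - Y0 0 \<omega>) d"
    unfolding condE_def DeltaY_def
    using integrable_cond_potential_outcomes[OF d d] D_eq
    by (intro integral_cong_AE) (auto elim: AE_mp)
  also have "\<dots> = condE K (Y1 d) d - condE K (Y0 0) d"
    using integrable_cond_potential_outcomes[OF d d] by (rule condE_diff)
  finally show ?thesis .
qed

lemma zero_in_support: "0 \<in> S"
  using tps unfolding two_period_setup_def by simp

lemma condE_Y1_eq_ATT:
  assumes "a \<in> S" and "b \<in> S"
  shows "condE K (Y1 a) b = ATT K Y1 a b + condE K (Y1 0) b"
  using condE_diff[of K, OF integrable_cond_potential_outcomes(1)[OF assms]
      integrable_cond_potential_outcomes(1)[OF zero_in_support \<open>b \<in> S\<close>]]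
  unfolding ATT_def by simp

lemma ATT_diff:
  assumes "a \<in> S" and "a' \<in> S" and "b \<in> S"
  shows "ATT K Y1 a b - ATT K Y1 a' b = condE K (\<lambda>\<omega>. Y1 a \<omega> - Y1 a' \<omega>) b"
  using condE_diff[of K, OF integrable_cond_potential_outcomes(1)[OF assms(1,3)]
      integrable_cond_potential_outcomes(1)[OF assms(2,3)]]
    condE_Y1_eq_ATT[OF assms(1,3)] condE_Y1_eq_ATT[OF assms(2,3)]
  by simp

lemma condE_DeltaY_parallel_trends:
  assumes PT: "parallel_trends K Y0 Y1 S" and d: "d \<in> S"
  shows "condE K (DeltaY D Y0 Y1) d = ATT K Y1 d d + condE K (\<lambda>\<omega>. Y1 0 \<omega> - Y0 0 \<omega>) 0"
proof -
  have "condE K (\<lambda>\<omega>. Y1 0 \<omega> - Y0 0 \<omega>) 0 = condE K (Y1 0) d - condE K (Y0 0) d"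
    using PT d condE_diff[of K, OF integrable_cond_potential_outcomes[OF zero_in_support d]]
    unfolding parallel_trends_def by simp
  then show ?thesis
    using condE_DeltaY[OF d] condE_Y1_eq_ATT[OF d d] by simp
qed

lemma condE_DeltaY_strong_parallel_trends:
  assumes SPT: "strong_parallel_trends M K Y0 Y1 S" and d: "d \<in> S"
  shows "condE K (DeltaY D Y0 Y1) d = (\<integral>\<omega>. Y1 d \<omega> \<partial>M) - (\<integral>\<omega>. Y0 0 \<omega> \<partial>M)"
proof -
  have "integrable M (Y1 d)" and "integrable M (Y0 0)"
    using tps d unfolding two_period_setup_def by auto
  moreover have "(\<integral>\<omega>. Y1 d \<omega> - Y0 0 \<omega> \<partial>M) = condE K (\<lambda>\<omega>. Y1 d \<omega> - Y0 0 \<omega>) d"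
    using SPT d unfolding strong_parallel_trends_def by blast
  ultimately show ?thesis
    using condE_DeltaY[OF d] integrable_cond_potential_outcomes[OF d d]
    by (simp add: condE_diff Bochner_Integration.integral_diff)
qed

lemma condE_DeltaY_has_derivative_parallel_trends:
  assumes PT: "parallel_trends K Y0 Y1 S" and "T \<subseteq> S" and d: "d \<in> T"
    and ATT_deriv: "((\<lambda>(x, y). ATT K Y1 x y) has_derivative g') (at (d, d) within T \<times> T)"
  shows "((\<lambda>l. condE K (Y1 l) d) has_real_derivative g' (1, 0)) (at d within T)"
    and "((\<lambda>l. ATT K Y1 d l) has_real_derivative g' (0, 1)) (at d within T)"
    and "((\<lambda>l. condE K (DeltaY D Y0 Y1) l) has_real_derivative g' (1, 0) + g' (0, 1))
           (at d within T)"
proof -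
  from has_real_derivative_partials[OF ATT_deriv d d]
  have ATT_partial1: "((\<lambda>l. ATT K Y1 l d) has_real_derivative g' (1, 0)) (at d within T)"
    and ATT_partial2: "((\<lambda>l. ATT K Y1 d l) has_real_derivative g' (0, 1)) (at d within T)"
    by simp_all
  from has_real_derivative_diagonal[OF ATT_deriv]
  have ATT_diagonal:
    "((\<lambda>l. ATT K Y1 l l) has_real_derivative g' (1, 0) + g' (0, 1)) (at d within T)"
    by simp
  show "((\<lambda>l. condE K (Y1 l) d) has_real_derivative g' (1, 0)) (at d within T)"
    using ATT_partial1 d
  proof (rule has_field_derivative_add_const_on[where c = "condE K (Y1 0) d"])
    show "condE K (Y1 l) d = ATT K Y1 l d + condE K (Y1 0) d" if "l \<in> T" for l
      using condE_Y1_eq_ATT that d \<open>T \<subseteq> S\<close> by blast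
  qed
  show "((\<lambda>l. ATT K Y1 d l) has_real_derivative g' (0, 1)) (at d within T)"
    by (fact ATT_partial2)
  show "((\<lambda>l. condE K (DeltaY D Y0 Y1) l) has_real_derivative g' (1, 0) + g' (0, 1))
          (at d within T)"
    using ATT_diagonal d
  proof (rule has_field_derivative_add_const_on
      [where c = "condE K (\<lambda>\<omega>. Y1 0 \<omega> - Y0 0 \<omega>) 0"])
    show "condE K (DeltaY D Y0 Y1) l = ATT K Y1 l l + condE K (\<lambda>\<omega>. Y1 0 \<omega> - Y0 0 \<omega>) 0"
      if "l \<in> T" for l
      using condE_DeltaY_parallel_trends[OF PT] that \<open>T \<subseteq> S\<close> by blast
  qed
qed

lemma condE_DeltaY_increment_parallel_trends:
  assumes PT: "parallel_trends K Y0 Y1 S" and "a \<in> S" and "b \<in> S"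
  shows "condE K (DeltaY D Y0 Y1) b - condE K (DeltaY D Y0 Y1) a
           = condE K (\<lambda>\<omega>. Y1 b \<omega> - Y1 a \<omega>) b + (ATT K Y1 a b - ATT K Y1 a a)"
  using assms condE_DeltaY_parallel_trends ATT_diff[of b a b] by simp

lemma mean_Y1_has_derivative_strong_parallel_trends:
  assumes SPT: "strong_parallel_trends M K Y0 Y1 S" and "T \<subseteq> S" and "d \<in> T"
    and "((\<lambda>l. condE K (DeltaY D Y0 Y1) l) has_real_derivative m) (at d within T)"
  shows "((\<lambda>l. \<integral>\<omega>. Y1 l \<omega> \<partial>M) has_real_derivative m) (at d within T)"
  using assms(4,3)
proof (rule has_field_derivative_add_const_on[where c = "\<integral>\<omega>. Y0 0 \<omega> \<partial>M"])
  show "(\<integral>\<omega>. Y1 l \<omega> \<partial>M) = condE K (DeltaY D Y0 Y1) l + (\<integral>\<omega>. Y0 0 \<omega> \<partial>M)" if "l \<in> T" for l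
    using condE_DeltaY_strong_parallel_trends[OF SPT, of l] that \<open>T \<subseteq> S\<close> by auto
qed

lemma condE_DeltaY_increment_strong_parallel_trends:
  assumes SPT: "strong_parallel_trends M K Y0 Y1 S" and "a \<in> S" and "b \<in> S"
  shows "condE K (DeltaY D Y0 Y1) b - condE K (DeltaY D Y0 Y1) a
           = (\<integral>\<omega>. Y1 b \<omega> - Y1 a \<omega> \<partial>M)"
proof -
  have "integrable M (Y1 a)" and "integrable M (Y1 b)"
    using tps assms unfolding two_period_setup_def by auto
  then show ?thesis
    using assms condE_DeltaY_strong_parallel_trends by simp
qed

end

theorem proposition3:
  fixes M :: "'a measure" and D :: "'a \<Rightarrow> real"
    and Y0 Y1 :: "real \<Rightarrow> 'a \<Rightarrow> real" and K :: "real \<Rightarrow> 'a measure"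
  shows
   "(\<forall>dL dU f. continuous_treatment M D Y0 Y1 K dL dU f
        \<and> two_period_setup M D Y0 Y1 K (insert 0 {dL..dU})
        \<and> parallel_trends K Y0 Y1 (insert 0 {dL..dU})
        \<and> (\<forall>a\<in>{dL..dU}. \<forall>b\<in>{dL..dU}.
              (\<lambda>(x, y). ATT K Y1 x y) differentiable (at (a, b) within {dL..dU} \<times> {dL..dU}))
      \<longrightarrow> (\<forall>d\<in>{dL..dU}. \<exists>A B.
             ((\<lambda>l. condE K (Y1 l) d) has_real_derivative A) (at d within {dL..dU}) \<and>
             ((\<lambda>l. ATT K Y1 d l) has_real_derivative B) (at d within {dL..dU}) \<and>
             ((\<lambda>l. condE K (DeltaY D Y0 Y1) l) has_real_derivative (A + B))
                (at d within {dL..dU})))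
  \<and> (\<forall>J ds. multivalued_treatment M D J ds
        \<and> two_period_setup M D Y0 Y1 K (ds ` {0..J})
        \<and> parallel_trends K Y0 Y1 (ds ` {0..J})
      \<longrightarrow> (\<forall>j\<in>{1..J}.
             condE K (DeltaY D Y0 Y1) (ds j) - condE K (DeltaY D Y0 Y1) (ds (j - 1))
             = condE K (\<lambda>\<omega>. Y1 (ds j) \<omega> - Y1 (ds (j - 1)) \<omega>) (ds j)
               + (ATT K Y1 (ds (j - 1)) (ds j) - ATT K Y1 (ds (j - 1)) (ds (j - 1)))))
  \<and> (\<forall>dL dU f. continuous_treatment M D Y0 Y1 K dL dU f
        \<and> two_period_setup M D Y0 Y1 K (insert 0 {dL..dU})
        \<and> strong_parallel_trends M K Y0 Y1 (insert 0 {dL..dU})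
      \<longrightarrow> (\<forall>d\<in>{dL..dU}. \<exists>A.
             ((\<lambda>l. \<integral>\<omega>. Y1 l \<omega> \<partial>M) has_real_derivative A) (at d within {dL..dU}) \<and>
             ((\<lambda>l. condE K (DeltaY D Y0 Y1) l) has_real_derivative A) (at d within {dL..dU})))
  \<and> (\<forall>J ds. multivalued_treatment M D J ds
        \<and> two_period_setup M D Y0 Y1 K (ds ` {0..J})
        \<and> strong_parallel_trends M K Y0 Y1 (ds ` {0..J})
      \<longrightarrow> (\<forall>j\<in>{1..J}.
             condE K (DeltaY D Y0 Y1) (ds j) - condE K (DeltaY D Y0 Y1) (ds (j - 1))
             = (\<integral>\<omega>. Y1 (ds j) \<omega> - Y1 (ds (j - 1)) \<omega> \<partial>M)))"
proof (intro conjI allI impI ballI, goal_cases)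
  case (1 dL dU f d)
  then obtain g' where "((\<lambda>(x, y). ATT K Y1 x y) has_derivative g')
                          (at (d, d) within {dL..dU} \<times> {dL..dU})"
    unfolding differentiable_def by blast
  with 1 condE_DeltaY_has_derivative_parallel_trends[OF _ _ subset_insertI, of M D Y0 Y1 K 0]
  show ?case by blast
next
  case (2 J ds j)
  then have "ds j \<in> ds ` {0..J}" and "ds (j - 1) \<in> ds ` {0..J}" by auto
  with 2 condE_DeltaY_increment_parallel_trends[of M D Y0 Y1 K "ds ` {0..J}"]
  show ?case by blast
next
  case (3 dL dU f d)
  then obtain m where "((\<lambda>l. condE K (DeltaY D Y0 Y1) l) has_real_derivative m)
                          (at d within {dL..dU})"
    unfolding continuous_treatment_def by blast
  with 3 mean_Y1_has_derivative_strong_parallel_trends[OF _ _ subset_insertI, of M D Y0 Y1 K 0]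
  show ?case by blast
next
  case (4 J ds j)
  then have "ds j \<in> ds ` {0..J}" and "ds (j - 1) \<in> ds ` {0..J}" by auto
  with 4 condE_DeltaY_increment_strong_parallel_trends[of M D Y0 Y1 K "ds ` {0..J}"]
  show ?case by blast
qed

end
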